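(* Let $n\ge6$ be even and let $\varrho:G_n\to\mathcal L$ be a homomorphism. Then $\mathrm{Area}_n(p,q;\varrho)$ does not depend on the choice of $p,q\in\overline{\mathrm B}W$.
   Context: Let $W$ be a 2-dimensional complex vector space with a hermitian form $\langle\cdot,\cdot\rangle$ of signature $(+,-)$. In $\mathbb{CP}W$ let $\mathrm BW$ be the negative points (the Poincaré disc, curvature $-1$, oriented by its complex structure), $\mathrm SW$ the isotropic points, $\overline{\mathrm B}W=\mathrm BW\cup\mathrm SW$; $\mathcal L=\mathrm{PU}(W)$ is the group of orientation-preserving isometries of $\mathrm BW$. Oriented triangle area: $\mathrm{Area}\,\Delta(p_1,p_2,p_3)=2\arg(-\langle p_1,p_2\rangle\langle p_2,p_3\rangle\langle p_3,p_1\rangle)$ ($\arg\in[-\pi,\pi]$) if no two vertices are equal isotropic points, $0$ otherwise. $\mathrm{Area}(p_1,\dots,p_m):=\sum_{k=1}^m\mathrm{Area}\,\Delta(c,p_k,p_{k+1})$ (indices mod $m$), independent of $c\in\overline{\mathrm B}W$. $H_n$ is the group generated by $r_1,\dots,r_n$ with relations $r_i^2=1$, $r_n\cdots r_1=1$, indices mod $n$; for even $n$, $G_n\le H_n$ is the index-2 subgroup of words of even length in the $r_i$. Put $v_i:=r_i\cdots r_2r_1$ for $0\le i\le n-1$ ($v_0=1$); for $0\le i\le n-2$ put $w_i:=v_i$ if $i$ is even and $w_i:=v_ir_n$ if $i$ is odd, and $w_{i+n-1}:=r_nw_ir_n$; indices of the $w_i$ are mod $2n-2$; all $w_i\in G_n$.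 Write $w_ix$ for $\varrho(w_i)x$. Define $\mathrm{Area}_n(p,q;\varrho):=\mathrm{Area}(w_0p,w_1q,w_2p,w_3q,\dots,w_{2n-4}p,w_{2n-3}q)$ (the $2n-2$ points $w_jx_j$, with $x_j=p$ for even $j$ and $x_j=q$ for odd $j$). *)

theory Defs
  imports "HOL-Analysis.Analysis"
begin

text \<open>The hermitian space W is modelled as complex^2 with a form given by a
  hermitian matrix J: herm J u v = sum_{i,j} u_i J_ij conj(v_j)
  (linear in the first, conjugate-linear in the second argument).\<close>

definition herm :: "complex^2^2 \<Rightarrow> complex^2 \<Rightarrow> complex^2 \<Rightarrow> complex" where
  "herm J u v = (\<Sum>i\<in>UNIV. \<Sum>j\<in>UNIV. u$i * J$i$j * cnj (v$j))"

definition signature_pm :: "complex^2^2 \<Rightarrow> bool" where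
  "signature_pm J \<longleftrightarrow> (\<forall>i j. J$j$i = cnj (J$i$j)) \<and>
     (\<exists>e1 e2. herm J e1 e1 = 1 \<and> herm J e2 e2 = -1 \<and> herm J e1 e2 = 0)"

definition unitary_J :: "complex^2^2 \<Rightarrow> complex^2^2 \<Rightarrow> bool" where
  "unitary_J J U \<longleftrightarrow> (\<forall>x y. herm J (U *v x) (U *v y) = herm J x y)"

text \<open>Equality in PU(W): proportional matrices.\<close>
definition mat_prop :: "complex^2^2 \<Rightarrow> complex^2^2 \<Rightarrow> bool" where
  "mat_prop A B \<longleftrightarrow> (\<exists>c. c \<noteq> 0 \<and> (\<forall>i j. A$i$j = c * B$i$j))"

text \<open>Words [a1,...,ak] in the letters 1..n stand for r_a1 r_a2 ... r_ak.
  hequiv n is the congruence defining H_n (relations r_i^2 = 1 and r_n...r_1 = 1).\<close>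
inductive hequiv :: "nat \<Rightarrow> nat list \<Rightarrow> nat list \<Rightarrow> bool" for n :: nat where
  hrefl: "hequiv n w w"
| hsym: "hequiv n u v \<Longrightarrow> hequiv n v u"
| htrans: "hequiv n u v \<Longrightarrow> hequiv n v w \<Longrightarrow> hequiv n u w"
| hcancel: "i \<in> {1..n} \<Longrightarrow> hequiv n (u @ [i, i] @ v) (u @ v)"
| hrel: "hequiv n (u @ rev [1..<n+1] @ v) (u @ v)"

text \<open>Words representing elements of G_n (even length).\<close>
definition gword :: "nat \<Rightarrow> nat list \<Rightarrow> bool" where
  "gword n w \<longleftrightarrow> set w \<subseteq> {1..n} \<and> even (length w)"

text \<open>A homomorphism rho : G_n -> PU(W), given on words via unitary representatives.\<close>
definition proj_hom :: "complex^2^2 \<Rightarrow> nat \<Rightarrow> (nat list \<Rightarrow> complex^2^2) \<Rightarrow> bool" where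
  "proj_hom J n \<rho> \<longleftrightarrow>
     (\<forall>w. gword n w \<longrightarrow> unitary_J J (\<rho> w)) \<and>
     (\<forall>u v. gword n u \<longrightarrow> gword n v \<longrightarrow> mat_prop (\<rho> (u @ v)) (\<rho> u ** \<rho> v)) \<and>
     (\<forall>u v. gword n u \<longrightarrow> gword n v \<longrightarrow> hequiv n u v \<longrightarrow> mat_prop (\<rho> u) (\<rho> v))"

definition vword :: "nat \<Rightarrow> nat list" where
  "vword i = rev [1..<i+1]"

definition wbase :: "nat \<Rightarrow> nat \<Rightarrow> nat list" where
  "wbase n i = vword i @ (if odd i then [n] else [])"

definition wword :: "nat \<Rightarrow> nat \<Rightarrow> nat list" where
  "wword n j = (if j < n - 1 then wbase n j else [n] @ wbase n (j - (n - 1)) @ [n])"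

text \<open>Points of closed ball (nonzero representatives with nonpositive norm).\<close>
definition closedB :: "complex^2^2 \<Rightarrow> complex^2 \<Rightarrow> bool" where
  "closedB J x \<longleftrightarrow> x \<noteq> 0 \<and> Re (herm J x x) \<le> 0"

text \<open>x and y represent the same isotropic point.\<close>
definition iso_eq :: "complex^2^2 \<Rightarrow> complex^2 \<Rightarrow> complex^2 \<Rightarrow> bool" where
  "iso_eq J x y \<longleftrightarrow> herm J x x = 0 \<and> (\<exists>c. y = c *s x)"

definition tri_area :: "complex^2^2 \<Rightarrow> complex^2 \<Rightarrow> complex^2 \<Rightarrow> complex^2 \<Rightarrow> real" where
  "tri_area J a b c =
     (if iso_eq J a b \<or> iso_eq J b c \<or> iso_eq J c a then 0
      else 2 * Arg (- (herm J a b * herm J b c * herm J c a)))"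

text \<open>Area(p_1,...,p_m) computed with auxiliary point c (points indexed 0..m-1).\<close>
definition area_poly :: "complex^2^2 \<Rightarrow> complex^2 \<Rightarrow> (nat \<Rightarrow> complex^2) \<Rightarrow> nat \<Rightarrow> real" where
  "area_poly J c ps m = (\<Sum>k<m. tri_area J c (ps k) (ps (Suc k mod m)))"

definition area_n :: "complex^2^2 \<Rightarrow> nat \<Rightarrow> (nat list \<Rightarrow> complex^2^2) \<Rightarrow> complex^2 \<Rightarrow>
                      complex^2 \<Rightarrow> complex^2 \<Rightarrow> real" where
  "area_n J n \<rho> c p q =
     area_poly J c (\<lambda>j. \<rho> (wword n j) *v (if even j then p else q)) (2 * n - 2)"

end

theory Submission
  imports Defs
begin

text \<open>In the disc coordinate zeta = alpha / beta of a frame e1, e2 of W, the triangle area is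
  2 Arg (disc_triple ...), and disc_triple takes values in the closed right half plane; this
  makes the area an antisymmetric additive cocycle. Hence polygon areas do not depend on the
  base point c, and the difference of the areas of two polygons is the sum of the areas of the
  quadrilaterals spanned by corresponding edges. When the vertices w_j p of even index are
  replaced by w_j p', the quadrilateral at the edge (w_j, w_(j+1)) is mapped by the element
  w_(j'+1) w_j^-1 of G_n, j' = j + n - 1, onto the one at the edge (w_j', w_(j'+1)) with
  the orientation reversed, so the quadrilaterals cancel in pairs; the same holds for q.
  The argument needs only n even and n \<ge> 2.\<close>

section \<open>The triangle area in the disc model\<close>

text \<open>The triple product - <a,b> <b,c> <c,a> for the form <z,w> = z cnj w - 1 of the disc
  model.\<close>
definition disc_triple :: "complex \<Rightarrow> complex \<Rightarrow> complex \<Rightarrow> complex" where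
  "disc_triple a b c = - ((a * cnj b - 1) * (b * cnj c - 1) * (c * cnj a - 1))"

lemma disc_triple_rotate: "disc_triple b c a = disc_triple a b c"
  unfolding disc_triple_def by (simp add: mult_ac)

lemma disc_triple_swap: "disc_triple b a c = cnj (disc_triple a b c)"
  unfolding disc_triple_def by (simp add: mult_ac)

lemma disc_triple_expand:
  "disc_triple a b c = - ((a*cnj a)*(b*cnj b)*(c*cnj c) - 1 - (b*cnj b)*cnj (c*cnj a)
     - (c*cnj c)*cnj (a*cnj b) - (a*cnj a)*cnj (b*cnj c) + a*cnj b + b*cnj c + c*cnj a)"
  unfolding disc_triple_def by (simp add: algebra_simps)

lemma Re_disc_triple:
  "Re (disc_triple a b c) = (1 - norm a*norm b)*(1 - norm b*norm c)*(1 - norm c*norm a)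
     + (1 - (norm c)\<^sup>2)*(norm a*norm b - Re (a*cnj b))
     + (1 - (norm a)\<^sup>2)*(norm b*norm c - Re (b*cnj c))
     + (1 - (norm b)\<^sup>2)*(norm c*norm a - Re (c*cnj a))"
proof -
  have "Re (disc_triple a b c) = - ((norm a)\<^sup>2*(norm b)\<^sup>2*(norm c)\<^sup>2 - 1
     - (norm b)\<^sup>2 * Re (c*cnj a) - (norm c)\<^sup>2 * Re (a*cnj b) - (norm a)\<^sup>2 * Re (b * cnj c)
     + Re (a*cnj b) + Re (b*cnj c) + Re (c*cnj a))"
    unfolding disc_triple_expand complex_norm_square[symmetric] by simp
  then show ?thesis by (simp add: algebra_simps power2_eq_square)
qed

lemma Re_mult_cnj_le: "Re (a * cnj b) \<le> norm a * norm b"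
  by (metis complex_Re_le_cmod complex_mod_cnj norm_mult)

lemma Re_disc_triple_summands_nonneg:
  assumes "norm a \<le> 1" "norm b \<le> 1" "norm c \<le> 1"
  shows "0 \<le> (1 - norm a*norm b)*(1 - norm b*norm c)*(1 - norm c*norm a)"
    and "0 \<le> (1 - (norm c)\<^sup>2)*(norm a*norm b - Re (a*cnj b))"
    and "0 \<le> (1 - (norm a)\<^sup>2)*(norm b*norm c - Re (b*cnj c))"
    and "0 \<le> (1 - (norm b)\<^sup>2)*(norm c*norm a - Re (c*cnj a))"
  using assms Re_mult_cnj_le[of a b] Re_mult_cnj_le[of b c] Re_mult_cnj_le[of c a]
  by (auto intro!: mult_nonneg_nonneg mult_le_one power_le_one)

lemma Re_disc_triple_nonneg:
  assumes "norm a \<le> 1" "norm b \<le> 1" "norm c \<le> 1"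
  shows "0 \<le> Re (disc_triple a b c)"
  unfolding Re_disc_triple using Re_disc_triple_summands_nonneg[OF assms] by linarith

lemma mult_cnj_eq_1_imp_eq:
  assumes "norm a \<le> 1" "norm b \<le> 1" "a * cnj b = 1"
  shows "a = b"
proof -
  have "norm a * norm b = 1"
    using assms(3) by (metis complex_mod_cnj norm_mult norm_one)
  then have "norm b = 1"
    using assms(1,2) by (metis norm_ge_zero order_antisym mult.commute mult_left_le)
  then have "b * cnj b = 1" by (metis complex_norm_square of_real_1 one_power2)
  then have "a = (a * cnj b) * b" by (metis mult.assoc mult.commute mult.right_neutral)
  then show ?thesis using assms(3) by simp
qed

lemma disc_triple_eq_0_imp:
  assumes "norm a \<le> 1" "norm b \<le> 1" "norm c \<le> 1" "disc_triple a b c = 0"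
  shows "a = b \<or> b = c \<or> c = a"
  using assms mult_cnj_eq_1_imp_eq[of a b] mult_cnj_eq_1_imp_eq[of b c] mult_cnj_eq_1_imp_eq[of c a]
  unfolding disc_triple_def by auto

lemma Arg_disc_triple_diag:
  assumes "norm a \<le> 1"
  shows "Arg (disc_triple a a c) = 0"
proof -
  have "disc_triple a a c = (1 - a * cnj a) * ((a * cnj c - 1) * cnj (a * cnj c - 1))"
    unfolding disc_triple_def by (simp add: algebra_simps)
  also have "\<dots> = of_real ((1 - (norm a)\<^sup>2) * (norm (a * cnj c - 1))\<^sup>2)"
    by (simp only: complex_norm_square[symmetric]) simp
  moreover have "0 \<le> (1 - (norm a)\<^sup>2) * (norm (a * cnj c - 1))\<^sup>2"
    using assms by (auto intro!: mult_nonneg_nonneg power_le_one)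
  ultimately show ?thesis by (metis Arg_of_real not_less)
qed

text \<open>For an interior vertex a, the vanishing of the first two summands of the real part
  forces b * cnj c = 1, hence a degenerate triangle.\<close>
lemma Re_disc_triple_eq_0_imp_boundary:
  assumes "norm a \<le> 1" "norm b \<le> 1" "norm c \<le> 1"
    and "Re (disc_triple a b c) = 0" "disc_triple a b c \<noteq> 0"
  shows "norm a = 1"
proof (rule ccontr)
  assume "norm a \<noteq> 1"
  then have a: "norm a < 1" using assms(1) by simp
  note S = Re_disc_triple_summands_nonneg[OF assms(1-3)]
  have z1: "(1 - norm a*norm b)*(1 - norm b*norm c)*(1 - norm c*norm a) = 0"
   and z3: "(1 - (norm a)\<^sup>2)*(norm b*norm c - Re (b*cnj c)) = 0"
    using assms(4) S unfolding Re_disc_triple by linarith+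
  have "norm a * norm b < 1" "norm c * norm a < 1"
    using a assms(2,3) mult_left_le[of "norm b" "norm a"] mult_left_le_one_le[of "norm a" "norm c"]
    by auto
  then have bc: "norm b * norm c = 1" using z1 by auto
  have "1 - (norm a)\<^sup>2 > 0" using a by (simp add: power_less_one_iff)
  then have re: "Re (b * cnj c) = 1" using z3 bc by simp
  have "norm (b * cnj c) = 1" using bc by (simp add: norm_mult)
  then have "(Im (b * cnj c))\<^sup>2 = 0"
    using re by (metis add_cancel_right_right cmod_power2)
  then have "b * cnj c = 1" using re by (simp add: complex_eq_iff)
  then show False using assms(5) unfolding disc_triple_def by simp
qed

lemma Im_disc_triple_boundary:
  assumes "norm a = 1" "norm b = 1" "norm c = 1"
  shows "Im (disc_triple a b c) = -2 * (Im (a*cnj b) + Im (b*cnj c) + Im (c*cnj a))"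
proof -
  have "z * cnj z = 1" if "norm z = 1" for z
    using that by (metis complex_norm_square of_real_1 one_power2)
  then have "a*cnj a = 1" "b*cnj b = 1" "c * cnj c = 1" using assms by auto
  then show ?thesis unfolding disc_triple_expand by simp
qed

lemma Arg_disc_triple_swap:
  assumes "norm a \<le> 1" "norm b \<le> 1" "norm c \<le> 1"
  shows "Arg (disc_triple b a c) = - Arg (disc_triple a b c)"
proof -
  have swap: "Arg (disc_triple b a c) = Arg (cnj (disc_triple a b c))"
    by (rule arg_cong[OF disc_triple_swap])
  show ?thesis
  proof (cases "disc_triple a b c \<in> \<real>")
    case True
    then have "Arg (disc_triple a b c) = 0"
      using Re_disc_triple_nonneg[OF assms] by (simp add: Arg_real)
    then show ?thesis using True swap by (simp add: Arg_cnj)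
  qed (use swap in \<open>simp add: Arg_cnj\<close>)
qed

lemma disc_triple_cocycle_product:
  "disc_triple b c d * disc_triple c a d * disc_triple a b d * disc_triple b a c =
    of_real ((norm (b*cnj c - 1))\<^sup>2 * (norm (c*cnj d - 1))\<^sup>2 * (norm (d*cnj b - 1))\<^sup>2 *
             (norm (c*cnj a - 1))\<^sup>2 * (norm (a*cnj d - 1))\<^sup>2 * (norm (a*cnj b - 1))\<^sup>2)"
proof -
  have "disc_triple b c d * disc_triple c a d * disc_triple a b d * disc_triple b a c =
     ((b*cnj c - 1) * cnj (b*cnj c - 1)) * ((c*cnj d - 1) * cnj (c*cnj d - 1))
     * ((d*cnj b - 1) * cnj (d*cnj b - 1)) * ((c*cnj a - 1) * cnj (c*cnj a - 1))
     * ((a*cnj d - 1) * cnj (a*cnj d - 1)) * ((a*cnj b - 1) * cnj (a*cnj b - 1))"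
    unfolding disc_triple_def by (simp add: mult_ac)
  then show ?thesis by (simp only: complex_norm_square[symmetric]) simp
qed

lemma Arg_eq_pi_half_imp: "Arg z = pi/2 \<Longrightarrow> Re z = 0 \<and> 0 < Im z"
  using Arg_Re_nonneg[of z] Arg_Re_pos[of z] Arg_lt_pi[of z] pi_gt_zero by auto

lemma Arg_eq_minus_pi_half_imp: "Arg z = - pi/2 \<Longrightarrow> Re z = 0 \<and> Im z < 0"
  using Arg_Re_nonneg[of z] Arg_Re_pos[of z] Arg_neg_iff[of z] pi_gt_zero by auto

text \<open>Four arguments in the right half plane summing to a multiple of 2 pi can only sum to
  2 pi or -2 pi if all four numbers lie on the same half of the imaginary axis, which the last
  hypothesis excludes.\<close>
lemma Arg_sum_eq_0_of_prod_pos: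
  fixes z1 z2 z3 z4 :: complex
  assumes prod: "z1 * z2 * z3 * z4 = of_real r" "0 < r"
    and re: "0 \<le> Re z1" "0 \<le> Re z2" "0 \<le> Re z3" "0 \<le> Re z4"
    and im: "Re z1 = 0 \<Longrightarrow> Re z2 = 0 \<Longrightarrow> Re z3 = 0 \<Longrightarrow> Re z4 = 0 \<Longrightarrow>
      Im z1 + Im z2 + Im z3 + Im z4 = 0"
  shows "Arg z1 + Arg z2 + Arg z3 + Arg z4 = 0"
proof -
  define th where "th = Arg z1 + Arg z2 + Arg z3 + Arg z4"
  have nz: "z1 \<noteq> 0" "z2 \<noteq> 0" "z3 \<noteq> 0" "z4 \<noteq> 0" using prod by auto
  have "cis th = sgn (z1 * z2 * z3 * z4)"
    unfolding th_def using nz by (simp add: cis_mult[symmetric] cis_Arg sgn_mult)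
  also have "\<dots> = 1" using prod by (simp add: sgn_of_real)
  finally have "cos th = 1" by (metis cis.sel(1) one_complex.sel(1))
  then obtain k :: int where k: "th = real_of_int k * 2 * pi" using cos_one_2pi_int by blast
  have bnd: "\<bar>Arg z1\<bar> \<le> pi/2" "\<bar>Arg z2\<bar> \<le> pi/2" "\<bar>Arg z3\<bar> \<le> pi/2" "\<bar>Arg z4\<bar> \<le> pi/2"
    using re by (simp_all only: Arg_Re_nonneg)
  then have "\<bar>th\<bar> \<le> 2 * pi" unfolding th_def by linarith
  then have "\<bar>real_of_int k\<bar> * (2*pi) \<le> 1 * (2*pi)" using k by (simp add: abs_mult)
  then have "\<bar>k\<bar> \<le> 1" using pi_gt_zero by (simp only: mult_le_cancel_right_pos)
  moreover have "k \<noteq> 1"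
  proof
    assume "k = 1"
    then have "Arg z1 = pi/2" "Arg z2 = pi/2" "Arg z3 = pi/2" "Arg z4 = pi/2"
      using k bnd unfolding th_def by (auto simp: abs_le_iff)
    then show False using im Arg_eq_pi_half_imp by (smt (verit))
  qed
  moreover have "k \<noteq> -1"
  proof
    assume "k = -1"
    then have "Arg z1 = -pi/2" "Arg z2 = -pi/2" "Arg z3 = -pi/2" "Arg z4 = -pi/2"
      using k bnd unfolding th_def by (auto simp: abs_le_iff)
    then show False using im Arg_eq_minus_pi_half_imp by (smt (verit))
  qed
  ultimately have "k = 0" by linarith
  then show ?thesis using k unfolding th_def by simp
qed

lemma Im_disc_triple_cocycle_boundary:
  assumes "norm a = 1" "norm b = 1" "norm c = 1" "norm d = 1"
  shows "Im (disc_triple b c d) + Im (disc_triple c a d) + Im (disc_triple a b d)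
    + Im (disc_triple b a c) = 0"
proof -
  have "Im (y * cnj x) = - Im (x * cnj y)" for x y :: complex by simp
  then show ?thesis using assms by (simp add: Im_disc_triple_boundary)
qed

lemma Arg_disc_triple_cocycle:
  assumes a: "norm a \<le> 1" and b: "norm b \<le> 1" and c: "norm c \<le> 1" and d: "norm d \<le> 1"
  shows "Arg (disc_triple b c d) - Arg (disc_triple a c d) + Arg (disc_triple a b d)
    - Arg (disc_triple a b c) = 0"
proof (cases "a = b \<or> a = c \<or> a = d \<or> b = c \<or> b = d \<or> c = d")
  case True
  have diag: "Arg (disc_triple x x y) = 0" "Arg (disc_triple y x x) = 0" "Arg (disc_triple x y x) = 0"
    if "norm x \<le> 1" for x y
    using Arg_disc_triple_diag[OF that] disc_triple_rotate by metis+
  from True show ?thesis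
    using diag a b c Arg_disc_triple_swap[OF a b d] Arg_disc_triple_swap[OF a c b]
      disc_triple_rotate[of b c d] disc_triple_rotate[of a b c]
    by (elim disjE) simp_all
next
  case False
  let ?r = "(norm (b*cnj c - 1))\<^sup>2 * (norm (c*cnj d - 1))\<^sup>2 * (norm (d*cnj b - 1))\<^sup>2 *
    (norm (c*cnj a - 1))\<^sup>2 * (norm (a*cnj d - 1))\<^sup>2 * (norm (a*cnj b - 1))\<^sup>2"
  have "disc_triple b c d \<noteq> 0" "disc_triple c a d \<noteq> 0" "disc_triple a b d \<noteq> 0"
    "disc_triple b a c \<noteq> 0"
    using False disc_triple_eq_0_imp[OF b c d] disc_triple_eq_0_imp[OF c a d]
      disc_triple_eq_0_imp[OF a b d] disc_triple_eq_0_imp[OF b a c] by auto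
  then have "of_real ?r \<noteq> (0::complex)"
    unfolding disc_triple_cocycle_product[symmetric] by simp
  then have r: "0 < ?r" by (simp add: less_le)
  have im: "Im (disc_triple b c d) + Im (disc_triple c a d) + Im (disc_triple a b d)
      + Im (disc_triple b a c) = 0"
    if "Re (disc_triple b c d) = 0" "Re (disc_triple c a d) = 0"
  proof -
    have "norm b = 1 \<and> norm c = 1 \<and> norm d = 1"
      using Re_disc_triple_eq_0_imp_boundary[OF b c d] Re_disc_triple_eq_0_imp_boundary[OF c d b]
        Re_disc_triple_eq_0_imp_boundary[OF d b c] that(1) \<open>disc_triple b c d \<noteq> 0\<close>
      by (metis disc_triple_rotate)
    moreover have "norm a = 1"
      using Re_disc_triple_eq_0_imp_boundary[OF a d c] that(2) \<open>disc_triple c a d \<noteq> 0\<close>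
      by (metis disc_triple_rotate)
    ultimately show ?thesis using Im_disc_triple_cocycle_boundary by blast
  qed
  have "Arg (disc_triple b c d) + Arg (disc_triple c a d) + Arg (disc_triple a b d)
      + Arg (disc_triple b a c) = 0"
    using Re_disc_triple_nonneg a b c d
    by (intro Arg_sum_eq_0_of_prod_pos[OF disc_triple_cocycle_product r] im) blast+
  then show ?thesis
    using Arg_disc_triple_swap[OF a c d] Arg_disc_triple_swap[OF a b c] by simp
qed

lemma herm_expand:
  "herm J u v = u$1*J$1$1*cnj(v$1) + u$1*J$1$2*cnj(v$2) + u$2*J$2$1*cnj(v$1) + u$2*J$2$2*cnj(v$2)"
  by (simp add: herm_def sum_2)

lemma herm_diff_left: "herm J (x - y) z = herm J x z - herm J y z"
  unfolding herm_expand by (simp add: algebra_simps)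

lemma herm_scale_left: "herm J (c *s x) z = c * herm J x z"
  unfolding herm_expand by (simp add: algebra_simps)

lemma herm_scale_right: "herm J x (c *s z) = cnj c * herm J x z"
  unfolding herm_expand by (simp add: algebra_simps)

lemma herm_zero_left [simp]: "herm J 0 z = 0"
  unfolding herm_expand by simp

lemma herm_cnj_swap:
  assumes "\<forall>i j. J$j$i = cnj (J$i$j)"
  shows "herm J y x = cnj (herm J x y)"
proof -
  have "y$i * J$i$j * cnj (x$j) = cnj (x$j * J$j$i * cnj (y$i))" for i j
  proof -
    have "J$i$j = cnj (J$j$i)" using assms by blast
    then show ?thesis by (simp add: mult_ac)
  qed
  then have "herm J y x = (\<Sum>i\<in>UNIV. \<Sum>j\<in>UNIV. cnj (x$j * J$j$i * cnj (y$i)))"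
    unfolding herm_def by (intro sum.cong refl)
  also have "\<dots> = cnj (herm J x y)"
    unfolding herm_def cnj_sum by (subst sum.swap) simp
  finally show ?thesis .
qed

text \<open>The frame spans W because the matrix of the functionals herm J _ e1, herm J _ e2 on
  e1, e2 has determinant -1.\<close>
lemma signature_pm_frame:
  assumes "signature_pm J"
  obtains e1 e2 where "herm J e1 e1 = 1" "herm J e2 e2 = -1" "herm J e1 e2 = 0"
    "herm J e2 e1 = 0" "\<And>x. x = herm J x e1 *s e1 - herm J x e2 *s e2"
proof -
  from assms obtain e1 e2 where J: "\<forall>i j. J$j$i = cnj (J$i$j)"
    and e: "herm J e1 e1 = 1" "herm J e2 e2 = -1" "herm J e1 e2 = 0"
    unfolding signature_pm_def by blast
  have e21: "herm J e2 e1 = 0" using herm_cnj_swap[OF J, of e1 e2] e(3) by simp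
  define \<kappa> where "\<kappa> e i = J$i$1 * cnj (e$1) + J$i$2 * cnj (e$2)" for e :: "complex^2" and i
  have herm_\<kappa>: "herm J y e = y$1 * \<kappa> e 1 + y$2 * \<kappa> e 2" for y e
    unfolding herm_expand \<kappa>_def by (simp add: algebra_simps)
  define D where "D = \<kappa> e1 1 * \<kappa> e2 2 - \<kappa> e1 2 * \<kappa> e2 1"
  have "(e1$1 * e2$2 - e1$2 * e2$1) * D
      = herm J e1 e1 * herm J e2 e2 - herm J e1 e2 * herm J e2 e1"
    unfolding herm_\<kappa> D_def by (simp add: algebra_simps)
  then have D: "D \<noteq> 0" using e e21 by auto
  have "x = herm J x e1 *s e1 - herm J x e2 *s e2" for x
  proof -
    define y where "y = x - (herm J x e1 *s e1 - herm J x e2 *s e2)"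
    have y: "herm J y e1 = 0" "herm J y e2 = 0"
      unfolding y_def using e e21 by (simp_all add: herm_diff_left herm_scale_left)
    have "y$1 * D = \<kappa> e2 2 * herm J y e1 - \<kappa> e1 2 * herm J y e2"
      "y$2 * D = \<kappa> e1 1 * herm J y e2 - \<kappa> e2 1 * herm J y e1"
      unfolding herm_\<kappa> D_def by (simp_all add: algebra_simps)
    then have "y = 0" using y D by (simp add: vec_eq_iff forall_2)
    then show ?thesis unfolding y_def by simp
  qed
  with e e21 that show ?thesis by blast
qed

lemma herm_nondegenerate:
  assumes "signature_pm J" "\<And>y. herm J x y = 0"
  shows "x = 0"
proof -
  obtain e1 e2 where dec: "\<And>x. x = herm J x e1 *s e1 - herm J x e2 *s e2"
    using signature_pm_frame[OF assms(1)] by metis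
  have "x = herm J x e1 *s e1 - herm J x e2 *s e2" by (rule dec)
  also have "\<dots> = 0" using assms(2) by simp
  finally show ?thesis .
qed

lemma tri_area_eq_Arg: "tri_area J a b c = 2 * Arg (- (herm J a b * herm J b c * herm J c a))"
proof -
  have "iso_eq J x y \<Longrightarrow> herm J x y = 0" for x y
    unfolding iso_eq_def by (auto simp: herm_scale_right)
  then show ?thesis unfolding tri_area_def by (auto simp: Arg_zero)
qed

lemma tri_area_rotate: "tri_area J b c a = tri_area J a b c"
  unfolding tri_area_eq_Arg by (simp add: mult_ac)

lemma herm_diagonal_form:
  assumes "signature_pm J"
  obtains \<alpha> \<beta> where "\<And>x y. herm J x y = \<alpha> x * cnj (\<alpha> y) - \<beta> x * cnj (\<beta> y)"
    and "\<And>x. \<alpha> x = 0 \<Longrightarrow> \<beta> x = 0 \<Longrightarrow> x = 0"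
proof -
  have J: "\<forall>i j. J$j$i = cnj (J$i$j)" using assms unfolding signature_pm_def by blast
  obtain e1 e2 where dec: "\<And>x. x = herm J x e1 *s e1 - herm J x e2 *s e2"
    using signature_pm_frame[OF assms] by metis
  show ?thesis
  proof (rule that[of "\<lambda>x. herm J x e1" "\<lambda>x. herm J x e2"])
    fix x y
    have "herm J x y = herm J (herm J x e1 *s e1 - herm J x e2 *s e2) y"
      by (rule arg_cong[where f = "\<lambda>z. herm J z y"]) (rule dec)
    then show "herm J x y = herm J x e1 * cnj (herm J y e1) - herm J x e2 * cnj (herm J y e2)"
      by (simp add: herm_diff_left herm_scale_left herm_cnj_swap[OF J, of y])
  next
    fix x assume "herm J x e1 = 0" "herm J x e2 = 0"
    have "x = herm J x e1 *s e1 - herm J x e2 *s e2" by (rule dec)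
    also have "\<dots> = 0" using \<open>herm J x e1 = 0\<close> \<open>herm J x e2 = 0\<close> by simp
    finally show "x = 0" .
  qed
qed

text \<open>A point of the closed ball has beta \<noteq> 0 and its disc coordinate zeta = alpha / beta lies
  in the closed unit disc; the form becomes beta x cnj (beta y) (zeta x cnj (zeta y) - 1), and
  the positive factors do not change the argument.\<close>
lemma tri_area_disc_model:
  assumes "signature_pm J"
  obtains \<zeta> where "\<And>x. closedB J x \<Longrightarrow> norm (\<zeta> x) \<le> 1"
    and "\<And>a b c. closedB J a \<Longrightarrow> closedB J b \<Longrightarrow> closedB J c \<Longrightarrow>
      tri_area J a b c = 2 * Arg (disc_triple (\<zeta> a) (\<zeta> b) (\<zeta> c))"
proof -
  obtain \<alpha> \<beta> where form: "\<And>x y. herm J x y = \<alpha> x * cnj (\<alpha> y) - \<beta> x * cnj (\<beta> y)"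
    and zero: "\<And>x. \<alpha> x = 0 \<Longrightarrow> \<beta> x = 0 \<Longrightarrow> x = 0"
    using herm_diagonal_form[OF assms] by blast
  have closed: "\<beta> x \<noteq> 0 \<and> norm (\<alpha> x) \<le> norm (\<beta> x)" if "closedB J x" for x
  proof -
    have "Re (herm J x x) = (norm (\<alpha> x))\<^sup>2 - (norm (\<beta> x))\<^sup>2"
      unfolding form complex_norm_square[symmetric] by simp
    then have "(norm (\<alpha> x))\<^sup>2 \<le> (norm (\<beta> x))\<^sup>2" using that unfolding closedB_def by simp
    then have "norm (\<alpha> x) \<le> norm (\<beta> x)" using power2_le_imp_le norm_ge_zero by blast
    moreover have "x \<noteq> 0" using that unfolding closedB_def by simp
    ultimately show ?thesis using zero[of x] by auto
  qed
  define \<zeta> where "\<zeta> x = \<alpha> x / \<beta> x" for x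
  have disc: "norm (\<zeta> x) \<le> 1" if "closedB J x" for x
    using closed[OF that] unfolding \<zeta>_def by (simp add: norm_divide divide_le_eq_1)
  have \<alpha>: "\<alpha> x = \<zeta> x * \<beta> x" if "closedB J x" for x
    using closed[OF that] unfolding \<zeta>_def by simp
  have form_disc: "herm J x y = \<beta> x * cnj (\<beta> y) * (\<zeta> x * cnj (\<zeta> y) - 1)"
    if "closedB J x" "closedB J y" for x y
    unfolding form \<alpha>[OF that(1)] \<alpha>[OF that(2)] by (simp add: algebra_simps)
  have "tri_area J a b c = 2 * Arg (disc_triple (\<zeta> a) (\<zeta> b) (\<zeta> c))"
    if "closedB J a" "closedB J b" "closedB J c" for a b c
  proof -
    define r where "r = (norm (\<beta> a))\<^sup>2 * (norm (\<beta> b))\<^sup>2 * (norm (\<beta> c))\<^sup>2"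
    have "0 < r" unfolding r_def using closed that by simp
    have "- (herm J a b * herm J b c * herm J c a) =
       (\<beta> a * cnj (\<beta> a)) * (\<beta> b * cnj (\<beta> b)) * (\<beta> c * cnj (\<beta> c)) * disc_triple (\<zeta> a) (\<zeta> b) (\<zeta> c)"
      unfolding form_disc[OF that(1,2)] form_disc[OF that(2,3)] form_disc[OF that(3,1)]
        disc_triple_def by (simp add: mult_ac)
    also have "\<dots> = of_real r * disc_triple (\<zeta> a) (\<zeta> b) (\<zeta> c)"
      unfolding complex_norm_square[symmetric] r_def by simp
    finally show ?thesis unfolding tri_area_eq_Arg using \<open>0 < r\<close> by (simp add: Arg_times_of_real)
  qed
  with disc that show ?thesis by blast
qed

lemma tri_area_cocycle:
  assumes "signature_pm J" "closedB J x0" "closedB J x1" "closedB J x2" "closedB J x3"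
  shows "tri_area J x1 x2 x3 - tri_area J x0 x2 x3 + tri_area J x0 x1 x3 - tri_area J x0 x1 x2 = 0"
proof -
  obtain \<zeta> where disc: "\<And>x. closedB J x \<Longrightarrow> norm (\<zeta> x) \<le> 1"
    and T: "\<And>a b c. closedB J a \<Longrightarrow> closedB J b \<Longrightarrow> closedB J c \<Longrightarrow>
        tri_area J a b c = 2 * Arg (disc_triple (\<zeta> a) (\<zeta> b) (\<zeta> c))"
    using tri_area_disc_model[OF assms(1)] by blast
  show ?thesis
    using Arg_disc_triple_cocycle[OF disc[OF assms(2)] disc[OF assms(3)] disc[OF assms(4)]
        disc[OF assms(5)]] assms(2-5)
    by (simp add: T)
qed

lemma tri_area_swap:
  assumes "signature_pm J" "closedB J a" "closedB J b" "closedB J c"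
  shows "tri_area J b a c = - tri_area J a b c"
proof -
  obtain \<zeta> where disc: "\<And>x. closedB J x \<Longrightarrow> norm (\<zeta> x) \<le> 1"
    and T: "\<And>a b c. closedB J a \<Longrightarrow> closedB J b \<Longrightarrow> closedB J c \<Longrightarrow>
        tri_area J a b c = 2 * Arg (disc_triple (\<zeta> a) (\<zeta> b) (\<zeta> c))"
    using tri_area_disc_model[OF assms(1)] by blast
  show ?thesis
    using Arg_disc_triple_swap[OF disc[OF assms(2)] disc[OF assms(3)] disc[OF assms(4)]]
      assms(2-4)
    by (simp add: T)
qed

lemma tri_area_degenerate:
  assumes "signature_pm J" "closedB J a" "closedB J b"
  shows "tri_area J a a b = 0"
proof -
  obtain \<zeta> where disc: "\<And>x. closedB J x \<Longrightarrow> norm (\<zeta> x) \<le> 1"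
    and T: "\<And>a b c. closedB J a \<Longrightarrow> closedB J b \<Longrightarrow> closedB J c \<Longrightarrow>
        tri_area J a b c = 2 * Arg (disc_triple (\<zeta> a) (\<zeta> b) (\<zeta> c))"
    using tri_area_disc_model[OF assms(1)] by blast
  show ?thesis using Arg_disc_triple_diag[OF disc[OF assms(2)]] assms(2,3) by (simp add: T)
qed

lemma tri_area_unitary:
  assumes "unitary_J J U"
  shows "tri_area J (U *v a) (U *v b) (U *v c) = tri_area J a b c"
  using assms unfolding unitary_J_def tri_area_eq_Arg by simp

lemma tri_area_scale:
  assumes "k1 \<noteq> 0" "k2 \<noteq> 0" "k3 \<noteq> 0"
  shows "tri_area J (k1 *s a) (k2 *s b) (k3 *s c) = tri_area J a b c"
proof -
  define r where "r = (norm k1)\<^sup>2 * (norm k2)\<^sup>2 * (norm k3)\<^sup>2"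
  have "0 < r" unfolding r_def using assms by simp
  have "- (herm J (k1 *s a) (k2 *s b) * herm J (k2 *s b) (k3 *s c) * herm J (k3 *s c) (k1 *s a))
     = (k1 * cnj k1) * (k2 * cnj k2) * (k3 * cnj k3) * (- (herm J a b * herm J b c * herm J c a))"
    by (simp add: herm_scale_left herm_scale_right mult_ac)
  also have "\<dots> = of_real r * (- (herm J a b * herm J b c * herm J c a))"
    unfolding complex_norm_square[symmetric] r_def by simp
  finally show ?thesis
    unfolding tri_area_eq_Arg by (simp only: Arg_times_of_real[OF \<open>0 < r\<close>])
qed

lemma closedB_unitary:
  assumes "signature_pm J" "unitary_J J U" "closedB J x"
  shows "closedB J (U *v x)"
proof -
  have U: "herm J (U *v a) (U *v b) = herm J a b" for a b
    using assms(2) unfolding unitary_J_def by blast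
  have "U *v x \<noteq> 0"
  proof
    assume "U *v x = 0"
    then have "herm J x y = 0" for y using U[of x y] by simp
    then show False using herm_nondegenerate[OF assms(1)] assms(3) unfolding closedB_def by blast
  qed
  then show ?thesis using assms(3) U unfolding closedB_def by simp
qed

section \<open>Polygon areas\<close>

lemma sum_lessThan_rotate1:
  fixes f :: "nat \<Rightarrow> 'a::comm_monoid_add"
  shows "(\<Sum>k<m. f (Suc k mod m)) = (\<Sum>k<m. f k)"
proof (cases m)
  case (Suc m')
  have "(\<Sum>k<Suc m'. f (Suc k mod Suc m')) = (\<Sum>k<m'. f (Suc k)) + f 0"
    by (simp add: sum.lessThan_Suc)
  also have "\<dots> = (\<Sum>k<Suc m'. f k)"
    by (subst sum.lessThan_Suc_shift) (simp add: add.commute)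
  finally show ?thesis unfolding Suc .
qed simp

lemma sum_lessThan_rotate:
  fixes f :: "nat \<Rightarrow> 'a::comm_monoid_add"
  shows "(\<Sum>k<m. f ((k + r) mod m)) = (\<Sum>k<m. f k)"
proof (induction r)
  case (Suc r)
  have "(\<Sum>k<m. f ((k + Suc r) mod m)) = (\<Sum>k<m. (\<lambda>i. f ((i + r) mod m)) (Suc k mod m))"
    by (simp add: mod_add_left_eq)
  also have "\<dots> = (\<Sum>k<m. f ((k + r) mod m))" by (rule sum_lessThan_rotate1)
  finally show ?case using Suc by simp
qed simp

lemma sum_eq_0_if_rotation_negates:
  fixes F :: "nat \<Rightarrow> real"
  assumes "\<And>k. k < m \<Longrightarrow> F k + F ((k + r) mod m) = 0"
  shows "(\<Sum>k<m. F k) = 0"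
proof -
  have "2 * (\<Sum>k<m. F k) = (\<Sum>k<m. F k) + (\<Sum>k<m. F ((k + r) mod m))"
    using sum_lessThan_rotate[of F r m] by simp
  also have "\<dots> = (\<Sum>k<m. F k + F ((k + r) mod m))" by (simp add: sum.distrib)
  also have "\<dots> = 0" using assms by simp
  finally show ?thesis by simp
qed

lemma area_poly_base_point:
  assumes "signature_pm J" "\<And>k. k < m \<Longrightarrow> closedB J (P k)" "closedB J c" "closedB J c'"
  shows "area_poly J c P m = area_poly J c' P m"
proof -
  have "area_poly J c P m - area_poly J c' P m =
     (\<Sum>k<m. tri_area J c c' (P (Suc k mod m)) - tri_area J c c' (P k))"
    unfolding area_poly_def sum_subtractf[symmetric]
  proof (intro sum.cong refl)
    fix k assume "k \<in> {..<m}"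
    then have "closedB J (P k)" "closedB J (P (Suc k mod m))" using assms(2) by auto
    then show "tri_area J c (P k) (P (Suc k mod m)) - tri_area J c' (P k) (P (Suc k mod m)) =
      tri_area J c c' (P (Suc k mod m)) - tri_area J c c' (P k)"
      using tri_area_cocycle[OF assms(1,3,4)] by fastforce
  qed
  also have "\<dots> = 0"
    using sum_lessThan_rotate1[of "\<lambda>k. tri_area J c c' (P k)" m] by (simp add: sum_subtractf)
  finally show ?thesis by simp
qed

definition quad_area ::
    "complex^2^2 \<Rightarrow> complex^2 \<Rightarrow> complex^2 \<Rightarrow> complex^2 \<Rightarrow> complex^2 \<Rightarrow> real" where
  "quad_area J a b b' a' = tri_area J a b b' + tri_area J a b' a'"

lemma quad_area_same_end:
  assumes "signature_pm J" "closedB J a" "closedB J b"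
  shows "quad_area J a b b a' = tri_area J a b a'"
  using tri_area_degenerate[OF assms(1,3,2)] tri_area_rotate[of J b b a]
  unfolding quad_area_def by simp

lemma quad_area_same_start:
  assumes "signature_pm J" "closedB J a" "closedB J b'"
  shows "quad_area J a b b' a = tri_area J a b b'"
  using tri_area_degenerate[OF assms] tri_area_rotate[of J a b' a]
  unfolding quad_area_def by simp

text \<open>Each quadrilateral is cut along its diagonal from P k; the base point terms telescope.\<close>
lemma area_poly_diff:
  assumes sig: "signature_pm J"
    and P: "\<And>k. k < m \<Longrightarrow> closedB J (P k)" and P': "\<And>k. k < m \<Longrightarrow> closedB J (P' k)"
    and c: "closedB J c"
  shows "area_poly J c P m - area_poly J c P' m =
    (\<Sum>k<m. quad_area J (P k) (P (Suc k mod m)) (P' (Suc k mod m)) (P' k))"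
proof -
  have "area_poly J c P m - area_poly J c P' m =
     (\<Sum>k<m. quad_area J (P k) (P (Suc k mod m)) (P' (Suc k mod m)) (P' k)
       + (tri_area J c (P k) (P' k) - tri_area J c (P (Suc k mod m)) (P' (Suc k mod m))))"
    unfolding area_poly_def sum_subtractf[symmetric]
  proof (intro sum.cong refl)
    fix k assume "k \<in> {..<m}"
    then have a: "closedB J (P k)" "closedB J (P (Suc k mod m))" "closedB J (P' k)"
        "closedB J (P' (Suc k mod m))"
      using P P' by auto
    have "tri_area J c (P' (Suc k mod m)) (P' k) = - tri_area J c (P' k) (P' (Suc k mod m))"
      using tri_area_swap[OF sig a(3) a(4) c] tri_area_rotate by metis
    then show "tri_area J c (P k) (P (Suc k mod m)) - tri_area J c (P' k) (P' (Suc k mod m)) =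
      quad_area J (P k) (P (Suc k mod m)) (P' (Suc k mod m)) (P' k)
      + (tri_area J c (P k) (P' k) - tri_area J c (P (Suc k mod m)) (P' (Suc k mod m)))"
      using tri_area_cocycle[OF sig c a(1) a(2) a(4)] tri_area_cocycle[OF sig c a(1) a(4) a(3)]
      unfolding quad_area_def by linarith
  qed
  also have "\<dots> = (\<Sum>k<m. quad_area J (P k) (P (Suc k mod m)) (P' (Suc k mod m)) (P' k))"
    using sum_lessThan_rotate1[of "\<lambda>k. tri_area J c (P k) (P' k)" m]
    by (simp add: sum.distrib sum_subtractf)
  finally show ?thesis .
qed

section \<open>Words in H_n\<close>

declare hequiv.htrans [trans]

lemma hequiv_append_cong: "hequiv n x y \<Longrightarrow> hequiv n (u @ x @ v) (u @ y @ v)"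
proof (induction arbitrary: u v rule: hequiv.induct)
  case (hcancel i a b)
  have "hequiv n ((u @ a) @ [i, i] @ (b @ v)) ((u @ a) @ (b @ v))"
    using hcancel by (rule hequiv.hcancel)
  then show ?case by simp
next
  case (hrel a b)
  have "hequiv n ((u @ a) @ rev [1..<n+1] @ (b @ v)) ((u @ a) @ (b @ v))"
    by (rule hequiv.hrel)
  then show ?case by simp
qed (blast intro: hequiv.intros)+

lemma hequiv_cancel_rev: "set w \<subseteq> {1..n} \<Longrightarrow> hequiv n (u @ w @ rev w @ v) (u @ v)"
proof (induction w arbitrary: u v)
  case (Cons a w)
  then have "hequiv n ((u @ [a]) @ w @ rev w @ ([a] @ v)) ((u @ [a]) @ ([a] @ v))"
    by (meson set_subset_Cons subset_trans)
  moreover have "hequiv n (u @ [a, a] @ v) (u @ v)"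
    by (rule hequiv.hcancel) (use Cons.prems in simp)
  ultimately show ?case by (auto intro: hequiv.htrans)
qed (simp add: hequiv.hrefl)

lemma hequiv_cancel_nn: "1 \<le> n \<Longrightarrow> hequiv n (u @ [n, n] @ v) (u @ v)"
  by (rule hequiv.hcancel) simp

lemma hequiv_inverse:
  assumes "set u \<subseteq> {1..n}" "hequiv n (u @ v) []"
  shows "hequiv n v (rev u)"
proof -
  have "hequiv n (rev u @ rev (rev u) @ v) v"
    using hequiv_cancel_rev[of "rev u" n "[]"] assms(1) by simp
  moreover have "hequiv n (rev u @ (u @ v) @ []) (rev u @ [] @ [])"
    using hequiv_append_cong[OF assms(2)] .
  ultimately show ?thesis by (auto intro: hequiv.intros)
qed

lemma hequiv_rev: "hequiv n u v \<Longrightarrow> hequiv n (rev u) (rev v)"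
proof (induction rule: hequiv.induct)
  case (hcancel i u v)
  then show ?case using hequiv.hcancel[of i n "rev v" "rev u"] by simp
next
  case (hrel u v)
  have "set [1..<n+1] \<subseteq> {1..n}" by auto
  then have cancel: "hequiv n ([1..<n+1] @ rev [1..<n+1]) []"
    using hequiv_cancel_rev[of "[1..<n+1]" n "[]" "[]"] by simp
  have "hequiv n [1..<n+1] ([1..<n+1] @ rev [1..<n+1])"
    using hequiv.hsym[OF hequiv.hrel[of n "[1..<n+1]" "[]"]] by simp
  also note cancel
  finally have "hequiv n [1..<n+1] []" .
  then show ?case using hequiv_append_cong[of n "[1..<n+1]" "[]" "rev v" "rev u"] by simp
qed (blast intro: hequiv.intros)+

lemma set_vword: "set (vword i) = {1..i}"
  unfolding vword_def by auto

lemma length_vword: "length (vword i) = i"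
  by (simp add: vword_def)

lemma vword_Suc: "vword (Suc i) = Suc i # vword i"
  by (simp add: vword_def)

text \<open>From the relation r_n r_(n-1) v_(n-2) = 1 one gets v_(n-2) = r_(n-1) r_n, hence
  v_(n-2)^-1 = r_n r_(n-1) = r_n v_(n-2) r_n.\<close>
lemma hequiv_rev_vword_top:
  assumes "2 \<le> n"
  shows "hequiv n (rev (vword (n-2)) @ [n, n]) ([n] @ vword (n-2) @ [n])"
proof -
  define x where "x = vword (n-2)"
  obtain k where k: "n = Suc (Suc k)" using assms by (metis add_2_eq_Suc le_Suc_ex)
  have "rev [1..<n+1] = [n, n-1] @ x" unfolding k x_def vword_def by simp
  then have "hequiv n ([n, n-1] @ x) []" using hequiv.hrel[of n "[]" "[]"] by simp
  then have x: "hequiv n x [n-1, n]" using hequiv_inverse[of "[n, n-1]" n x] assms by simp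
  then have rev_x: "hequiv n (rev x) [n, n-1]" using hequiv_rev[OF x] by simp
  have n: "1 \<le> n" using assms by simp
  have "hequiv n (rev x @ [n, n]) (rev x)" using hequiv_cancel_nn[OF n, of "rev x" "[]"] by simp
  also note rev_x
  also have "hequiv n [n, n-1] ([n] @ [n-1, n] @ [n])"
    using hequiv.hsym[OF hequiv_cancel_nn[OF n, of "[n, n-1]" "[]"]] by simp
  also have "hequiv n ([n] @ [n-1, n] @ [n]) ([n] @ x @ [n])"
    using hequiv_append_cong[OF hequiv.hsym[OF x]] .
  finally show ?thesis unfolding x_def by simp
qed

definition opposite_index :: "nat \<Rightarrow> nat \<Rightarrow> nat" where
  "opposite_index n j = (j + (n - 1)) mod (2 * n - 2)"

lemma opposite_index_less: "2 \<le> n \<Longrightarrow> opposite_index n j < 2 * n - 2"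
  unfolding opposite_index_def by simp

lemma opposite_index_opposite_index:
  assumes "j < 2 * n - 2"
  shows "opposite_index n (opposite_index n j) = j"
proof -
  have "opposite_index n (opposite_index n j) = (j + (n - 1) + (n - 1)) mod (2 * n - 2)"
    unfolding opposite_index_def by (simp add: mod_add_left_eq)
  also have "j + (n - 1) + (n - 1) = j + (2 * n - 2)" using assms by simp
  finally show ?thesis using assms by (simp only: mod_add_self2 mod_less)
qed

lemma even_mod_even_iff: "even (m::nat) \<Longrightarrow> even (x mod m) \<longleftrightarrow> even x"
  by (metis even_add even_mult_iff div_mult_mod_eq)

lemma even_opposite_index_iff:
  assumes "even n" "2 \<le> n"
  shows "even (opposite_index n j) \<longleftrightarrow> odd j"
  using assms unfolding opposite_index_def by (simp add: even_mod_even_iff)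

lemma even_Suc_mod_iff:
  assumes "even (m::nat)" "k < m"
  shows "even (Suc k mod m) \<longleftrightarrow> odd k"
proof (cases "Suc k < m")
  case False
  then have "Suc k = m" using assms(2) by simp
  then have "Suc k mod m = 0" "odd k" using assms(1) by auto
  then show ?thesis by simp
qed simp

lemma sum_eq_0_if_opposite_negates:
  fixes F :: "nat \<Rightarrow> real"
  assumes "even n" "2 \<le> n"
    and "\<And>k. k < 2*n - 2 \<Longrightarrow> even k = e \<Longrightarrow> F k + F (opposite_index n k) = 0"
  shows "(\<Sum>k<2*n - 2. F k) = 0"
proof (rule sum_eq_0_if_rotation_negates)
  fix k assume k: "k < 2*n - 2"
  have "F k + F (opposite_index n k) = 0"
  proof (cases "even k = e")
    case False
    then have "even (opposite_index n k) = e" using even_opposite_index_iff[OF assms(1,2)] by auto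
    then have "F (opposite_index n k) + F k = 0"
      using assms(3)[OF opposite_index_less[OF assms(2), of k]] opposite_index_opposite_index[OF k]
      by simp
    then show ?thesis by linarith
  qed (use assms(3) k in blast)
  then show "F k + F ((k + (n - 1)) mod (2*n - 2)) = 0" unfolding opposite_index_def .
qed

lemma wword_lower: "j < n - 1 \<Longrightarrow> wword n j = vword j @ (if odd j then [n] else [])"
  unfolding wword_def wbase_def by simp

lemma wword_upper: "j < n - 1 \<Longrightarrow> wword n (j + (n - 1)) = [n] @ wword n j @ [n]"
  unfolding wword_def by simp

lemma hequiv_rev_wword_append_wword_Suc:
  assumes "1 \<le> n" "Suc j < n - 1"
  shows "hequiv n (rev (wword n j) @ wword n (Suc j)) ([n] @ rev (wword n (Suc j)) @ wword n j @ [n])"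
proof (cases "even j")
  case True
  then have "wword n j = vword j" "wword n (Suc j) = vword (Suc j) @ [n]"
    using assms(2) by (simp_all add: wword_lower)
  then show ?thesis
    using hequiv.hsym[OF hequiv_cancel_nn[OF assms(1), of "[]" "rev (vword (Suc j)) @ vword j @ [n]"]]
    by (simp add: vword_Suc)
next
  case False
  then have "wword n j = vword j @ [n]" "wword n (Suc j) = vword (Suc j)"
    using assms(2) by (simp_all add: wword_lower)
  then show ?thesis
    using hequiv.hsym[OF hequiv_cancel_nn[OF assms(1), of "[n] @ rev (vword (Suc j)) @ vword j" "[]"]]
    by (simp add: vword_Suc)
qed

lemma hequiv_wword_step_lower:
  assumes "even n" "2 \<le> n" "j < n - 1"
  shows "hequiv n (rev (wword n j) @ wword n (Suc j mod (2*n-2)))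
    (rev (wword n (Suc (j + (n-1)) mod (2*n-2))) @ wword n (j + (n-1)))"
proof (cases "Suc j < n - 1")
  case True
  have n: "1 \<le> n" using assms(2) by simp
  define a where "a = wword n j"
  define b where "b = wword n (Suc j)"
  have "Suc j mod (2*n-2) = Suc j" "Suc (j + (n-1)) mod (2*n-2) = Suc j + (n-1)"
    using True by auto
  then have L: "rev (wword n j) @ wword n (Suc j mod (2*n-2)) = rev a @ b"
    and R: "rev (wword n (Suc (j + (n-1)) mod (2*n-2))) @ wword n (j + (n-1))
      = ([n] @ rev b) @ [n, n] @ (a @ [n])"
    using True wword_upper[of "Suc j" n] wword_upper[of j n] unfolding a_def b_def by simp_all
  have "hequiv n (rev a @ b) ([n] @ rev b @ a @ [n])"
    unfolding a_def b_def using hequiv_rev_wword_append_wword_Suc[OF n True] .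
  also have "hequiv n ([n] @ rev b @ a @ [n]) (([n] @ rev b) @ [n, n] @ (a @ [n]))"
    using hequiv.hsym[OF hequiv_cancel_nn[OF n, of "[n] @ rev b" "a @ [n]"]] by simp
  finally show ?thesis unfolding L R .
next
  case False
  then have "j = n - 2" using assms(3) by simp
  then have j: "j = n - 2" "even j" using assms(1) by (simp_all add: even_diff_nat)
  have "Suc j mod (2*n-2) = n - 1" "Suc (j + (n-1)) = 2*n - 2" using j(1) assms(2) by auto
  moreover have "wword n 0 = []" using assms(2) by (simp add: wword_lower vword_def)
  ultimately have "wword n (Suc j mod (2*n-2)) = [n, n]"
    and "wword n (Suc (j + (n-1)) mod (2*n-2)) = []"
    and "wword n j = vword (n-2)"
    and "wword n (j + (n-1)) = [n] @ vword (n-2) @ [n]"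
    using j assms(2,3) wword_upper[of 0 n] wword_upper[of j n] by (simp_all add: wword_lower)
  then show ?thesis using hequiv_rev_vword_top[OF assms(2)] by simp
qed

text \<open>In G_n, w_j^-1 w_(j+1) = w_(j'+1)^-1 w_j' for the opposite index j'. For j < n - 1
  this comes from w_(j+n-1) = r_n w_j r_n; the other indices follow by inverting both sides.\<close>
lemma hequiv_wword_step:
  assumes "even n" "2 \<le> n" "j < 2*n - 2"
  shows "hequiv n (rev (wword n j) @ wword n (Suc j mod (2*n-2)))
    (rev (wword n (Suc (opposite_index n j) mod (2*n-2))) @ wword n (opposite_index n j))"
proof (cases "j < n - 1")
  case True
  then have "opposite_index n j = j + (n - 1)" unfolding opposite_index_def by simp
  then show ?thesis using hequiv_wword_step_lower[OF assms(1,2) True] by simp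
next
  case False
  define i where "i = j - (n - 1)"
  have i: "j = i + (n - 1)" "i < n - 1" using False assms(3) unfolding i_def by auto
  then have "j + (n - 1) = i + (2*n - 2)" by simp
  then have "opposite_index n j = i"
    unfolding opposite_index_def using i by (simp only: mod_add_self2) simp
  moreover have "Suc i mod (2*n-2) = Suc i" using i by simp
  moreover have lower: "hequiv n (rev (wword n i) @ wword n (Suc i mod (2*n-2)))
      (rev (wword n (Suc j mod (2*n-2))) @ wword n j)"
    using hequiv_wword_step_lower[OF assms(1,2) i(2)] i(1) by simp
  ultimately show ?thesis using hequiv_rev[OF hequiv.hsym[OF lower]] by simp
qed

section \<open>The orbit polygon\<close>

lemma mat_prop_sym: "mat_prop A B \<Longrightarrow> mat_prop B A"
proof -
  assume "mat_prop A B"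
  then obtain k where k: "k \<noteq> 0" "\<forall>i j. A$i$j = k * B$i$j" unfolding mat_prop_def by blast
  then have "\<forall>i j. B$i$j = inverse k * A$i$j" by (simp add: field_simps)
  then show "mat_prop B A" unfolding mat_prop_def using k(1) by (intro exI[of _ "inverse k"]) simp
qed

lemma mat_prop_trans: "mat_prop A B \<Longrightarrow> mat_prop B C \<Longrightarrow> mat_prop A C"
proof -
  assume "mat_prop A B" "mat_prop B C"
  then obtain k l where "k \<noteq> 0" "\<forall>i j. A$i$j = k * B$i$j" "l \<noteq> 0" "\<forall>i j. B$i$j = l * C$i$j"
    unfolding mat_prop_def by blast
  then show "mat_prop A C" unfolding mat_prop_def by (intro exI[of _ "k * l"]) (simp add: mult.assoc)
qed

lemma mat_prop_mult_vec:
  assumes "mat_prop A B"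
  shows "\<exists>k. k \<noteq> 0 \<and> (\<forall>x. A *v x = k *s (B *v x))"
proof -
  obtain k where k: "k \<noteq> 0" "\<forall>i j. A$i$j = k * B$i$j" using assms unfolding mat_prop_def by blast
  then have "A *v x = k *s (B *v x)" for x
    by (simp add: vec_eq_iff matrix_vector_mult_def sum_distrib_left mult.assoc)
  with k(1) show ?thesis by blast
qed

lemma gword_append: "gword n u \<Longrightarrow> gword n v \<Longrightarrow> gword n (u @ v)"
  unfolding gword_def by auto

lemma gword_rev: "gword n u \<Longrightarrow> gword n (rev u)"
  unfolding gword_def by auto

lemma gword_wword:
  assumes "2 \<le> n" "j < 2*n - 2"
  shows "gword n (wword n j)"
proof -
  have lower: "gword n (wword n i)" if "i < n - 1" for i
  proof -
    have "even (length (wword n i))" using that by (simp add: wword_lower length_vword)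
    moreover have "set (wword n i) \<subseteq> {1..n}" using that by (auto simp: wword_lower set_vword)
    ultimately show ?thesis unfolding gword_def by blast
  qed
  show ?thesis
  proof (cases "j < n - 1")
    case False
    define i where "i = j - (n - 1)"
    have "j = i + (n - 1)" "i < n - 1" using False assms(2) unfolding i_def by auto
    then have "wword n j = [n] @ wword n i @ [n]" using wword_upper[of i n] by simp
    then show ?thesis using lower[OF \<open>i < n - 1\<close>] assms(1) by (auto simp: gword_def)
  qed (rule lower)
qed

lemma proj_hom_hequiv_mult_vec:
  assumes "proj_hom J n \<rho>" "gword n g" "gword n u" "gword n u'" "hequiv n (g @ u) u'"
  shows "\<exists>k. k \<noteq> 0 \<and> (\<forall>x. \<rho> u' *v x = k *s (\<rho> g *v (\<rho> u *v x)))"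
proof -
  have "mat_prop (\<rho> (g @ u)) (\<rho> g ** \<rho> u)" "mat_prop (\<rho> (g @ u)) (\<rho> u')"
    using assms unfolding proj_hom_def by (auto simp: gword_append)
  then have "mat_prop (\<rho> u') (\<rho> g ** \<rho> u)" by (meson mat_prop_sym mat_prop_trans)
  then have "\<exists>k. k \<noteq> 0 \<and> (\<forall>x. \<rho> u' *v x = k *s ((\<rho> g ** \<rho> u) *v x))"
    by (rule mat_prop_mult_vec)
  then show ?thesis by (simp add: matrix_vector_mul_assoc)
qed

text \<open>If rev u @ v and rev u' @ v' represent the same element, the isometry
  rho (u' @ rev u) carries rho u to rho u' and rho v to rho v' (up to scalars).\<close>
lemma tri_area_hequiv_transfer:
  assumes \<rho>: "proj_hom J n \<rho>" and gw: "gword n u" "gword n v" "gword n u'" "gword n v'"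
    and eq: "hequiv n (rev u @ v) (rev u' @ v')"
  shows "tri_area J (\<rho> u *v a) (\<rho> v *v b) (\<rho> u *v a') =
    tri_area J (\<rho> u' *v a) (\<rho> v' *v b) (\<rho> u' *v a')"
proof -
  define g where "g = u' @ rev u"
  have g: "gword n g" unfolding g_def using gw by (simp add: gword_append gword_rev)
  have sets: "set (rev u) \<subseteq> {1..n}" "set u' \<subseteq> {1..n}" using gw unfolding gword_def by auto
  have "hequiv n (g @ u) u'"
    using hequiv_cancel_rev[OF sets(1), of u' "[]"] unfolding g_def by simp
  then obtain k1 where k1: "k1 \<noteq> 0" "\<And>x. \<rho> u' *v x = k1 *s (\<rho> g *v (\<rho> u *v x))"
    using proj_hom_hequiv_mult_vec[OF \<rho> g gw(1,3)] by blast
  have "hequiv n (u' @ (rev u @ v) @ []) (u' @ (rev u' @ v') @ [])"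
    by (rule hequiv_append_cong[OF eq])
  then have "hequiv n (g @ v) (u' @ rev u' @ v')" unfolding g_def by simp
  also have "hequiv n (u' @ rev u' @ v') v'" using hequiv_cancel_rev[OF sets(2), of "[]" v'] by simp
  finally have "hequiv n (g @ v) v'" .
  then obtain k2 where k2: "k2 \<noteq> 0" "\<And>x. \<rho> v' *v x = k2 *s (\<rho> g *v (\<rho> v *v x))"
    using proj_hom_hequiv_mult_vec[OF \<rho> g gw(2,4)] by blast
  have "unitary_J J (\<rho> g)" using \<rho> g unfolding proj_hom_def by blast
  then have "tri_area J (\<rho> u *v a) (\<rho> v *v b) (\<rho> u *v a') =
      tri_area J (\<rho> g *v (\<rho> u *v a)) (\<rho> g *v (\<rho> v *v b)) (\<rho> g *v (\<rho> u *v a'))"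
    by (simp add: tri_area_unitary)
  also have "\<dots> = tri_area J (\<rho> u' *v a) (\<rho> v' *v b) (\<rho> u' *v a')"
    unfolding k1(2) k2(2) using k1(1) k2(1) by (simp add: tri_area_scale)
  finally show ?thesis .
qed

lemma tri_area_wword_opposite:
  assumes "proj_hom J n \<rho>" "even n" "2 \<le> n" "j < 2*n - 2"
  defines "m \<equiv> 2*n - 2" and "j' \<equiv> opposite_index n j"
  shows "tri_area J (\<rho> (wword n j) *v a) (\<rho> (wword n (Suc j mod m)) *v b) (\<rho> (wword n j) *v a') =
    tri_area J (\<rho> (wword n (Suc j' mod m)) *v a) (\<rho> (wword n j') *v b)
      (\<rho> (wword n (Suc j' mod m)) *v a')"
proof (rule tri_area_hequiv_transfer[OF assms(1)])
  have "0 < m" "j' < m" using assms(3) opposite_index_less[OF assms(3)] unfolding m_def j'_def by auto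
  then show "gword n (wword n j)" "gword n (wword n (Suc j mod m))" "gword n (wword n (Suc j' mod m))"
    "gword n (wword n j')"
    using gword_wword[OF assms(3)] assms(4) unfolding m_def by auto
  show "hequiv n (rev (wword n j) @ wword n (Suc j mod m)) (rev (wword n (Suc j' mod m)) @ wword n j')"
    unfolding m_def j'_def by (rule hequiv_wword_step[OF assms(2-4)])
qed

definition orbit_polygon ::
    "nat \<Rightarrow> (nat list \<Rightarrow> complex^2^2) \<Rightarrow> (bool \<Rightarrow> complex^2) \<Rightarrow> nat \<Rightarrow> complex^2" where
  "orbit_polygon n \<rho> x j = \<rho> (wword n j) *v x (even j)"

lemma closedB_wword_image:
  assumes "signature_pm J" "proj_hom J n \<rho>" "2 \<le> n" "j < 2*n - 2" "closedB J y"
  shows "closedB J (\<rho> (wword n j) *v y)"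
  using assms gword_wword unfolding proj_hom_def by (blast intro: closedB_unitary)

lemma closedB_orbit_polygon:
  assumes "signature_pm J" "proj_hom J n \<rho>" "2 \<le> n" "j < 2*n - 2" "\<And>b. closedB J (x b)"
  shows "closedB J (orbit_polygon n \<rho> x j)"
  unfolding orbit_polygon_def using assms by (simp add: closedB_wword_image)

text \<open>The quadrilateral at the edge (k, k+1) and the one at the opposite edge
  (opposite_index n k, opposite_index n k + 1) have opposite areas.\<close>
lemma area_poly_orbit_polygon_update:
  assumes sig: "signature_pm J" and \<rho>: "proj_hom J n \<rho>" and n: "even n" "2 \<le> n"
    and x: "\<And>b. closedB J (x b)" and u': "closedB J u'" and c: "closedB J c"
  shows "area_poly J c (orbit_polygon n \<rho> x) (2*n - 2) =
    area_poly J c (orbit_polygon n \<rho> (x(e := u'))) (2*n - 2)"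
proof -
  define m where "m = 2*n - 2"
  define W where "W j = \<rho> (wword n j)" for j
  define P where "P = orbit_polygon n \<rho> x"
  define P' where "P' = orbit_polygon n \<rho> (x(e := u'))"
  define F where "F k = quad_area J (P k) (P (Suc k mod m)) (P' (Suc k mod m)) (P' k)" for k
  have m: "even m" "Suc k mod m < m" "opposite_index n k < m" for k
    using n opposite_index_less[OF n(2)] unfolding m_def by auto
  have W: "closedB J (W k *v y)" if "k < m" "closedB J y" for k y
    using closedB_wword_image[OF sig \<rho> n(2)] that unfolding W_def m_def by blast
  have P: "P k = W k *v x (even k)" "P' k = W k *v (if even k = e then u' else x (even k))" for k
    unfolding P_def P'_def W_def orbit_polygon_def by auto
  have F_class: "F k = tri_area J (W k *v x e) (W (Suc k mod m) *v x (\<not> e)) (W k *v u')"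
    if "k < m" "even k = e" for k
  proof -
    have "even (Suc k mod m) = (\<not> e)" using even_Suc_mod_iff[OF m(1) that(1)] that(2) by simp
    then show ?thesis
      unfolding F_def P using that(2) quad_area_same_end[OF sig W[OF that(1) x] W[OF m(2) x]] by simp
  qed
  have F_other:
    "F k = - tri_area J (W (Suc k mod m) *v x e) (W k *v x (\<not> e)) (W (Suc k mod m) *v u')"
    if "k < m" "even k \<noteq> e" for k
  proof -
    have "even (Suc k mod m) = e" using even_Suc_mod_iff[OF m(1) that(1)] that(2) by simp
    then show ?thesis
      unfolding F_def P using that(2) quad_area_same_start[OF sig W[OF that(1) x] W[OF m(2) u']]
        tri_area_swap[OF sig W[OF m(2) x] W[OF that(1) x] W[OF m(2) u']] by simp
  qed
  have "(\<Sum>k<m. F k) = 0"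
    unfolding m_def
  proof (rule sum_eq_0_if_opposite_negates[OF n])
    fix k assume "k < 2*n - 2" "even k = e"
    then show "F k + F (opposite_index n k) = 0"
      using F_class F_other[OF m(3)] even_opposite_index_iff[OF n]
        tri_area_wword_opposite[OF \<rho> n, of k] unfolding W_def m_def by simp
  qed
  moreover have "area_poly J c P m - area_poly J c P' m = (\<Sum>k<m. F k)"
    unfolding F_def
  proof (rule area_poly_diff[OF sig _ _ c])
    fix k assume "k < m"
    then show "closedB J (P k)" "closedB J (P' k)"
      using closedB_orbit_polygon[OF sig \<rho> n(2)] x u' unfolding P_def P'_def m_def by auto
  qed
  ultimately show ?thesis unfolding P_def P'_def m_def by simp
qed

theorem lemma5p6:
  fixes J :: "complex^2^2" and n :: nat and \<rho> :: "nat list \<Rightarrow> complex^2^2"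
    and p q p' q' c c' :: "complex^2"
  assumes "signature_pm J"
    and "n \<ge> 6" and "even n"
    and "proj_hom J n \<rho>"
    and "closedB J p" and "closedB J q" and "closedB J p'" and "closedB J q'"
    and "closedB J c" and "closedB J c'"
  shows "area_n J n \<rho> c p q = area_n J n \<rho> c' p' q'"
proof -
  have n: "even n" "2 \<le> n" using assms(2,3) by auto
  define x where "x = (\<lambda>b. if b then p else q)"
  define x' where "x' = (\<lambda>b. if b then p' else q')"
  have x: "closedB J (x b)" "closedB J ((x(True := p')) b)" "closedB J (x' b)" for b
    using assms(5-8) unfolding x_def x'_def by auto
  have x': "x' = x(True := p', False := q')" unfolding x_def x'_def by auto
  have "area_n J n \<rho> c p q = area_poly J c (orbit_polygon n \<rho> x) (2*n - 2)"
    unfolding area_n_def orbit_polygon_def x_def ..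
  also have "\<dots> = area_poly J c (orbit_polygon n \<rho> (x(True := p'))) (2*n - 2)"
    using area_poly_orbit_polygon_update[OF assms(1,4) n x(1) assms(7,9)] .
  also have "\<dots> = area_poly J c (orbit_polygon n \<rho> x') (2*n - 2)"
    using area_poly_orbit_polygon_update[OF assms(1,4) n x(2) assms(8,9)] unfolding x' .
  also have "\<dots> = area_poly J c' (orbit_polygon n \<rho> x') (2*n - 2)"
    using closedB_orbit_polygon[OF assms(1,4) n(2) _ x(3)] assms(9,10)
    by (intro area_poly_base_point[OF assms(1)])
  also have "\<dots> = area_n J n \<rho> c' p' q'"
    unfolding area_n_def orbit_polygon_def x'_def ..
  finally show ?thesis .
qed

end
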